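(* For every $k\ge1$, $G_k$ is a normal subgroup of $B_k$.
   Context: Let $C_2=\{e,\sigma\}$ with $\sigma=(1,2)$. Define $B_1=C_2$ and $B_k=B_{k-1}\wr C_2$ for $k>1$, with elements written as wreath recursions $(g_1,g_2)\pi$, $g_1,g_2\in B_{k-1}$, $\pi\in C_2$, and multiplication $(g_1,g_2)\pi\cdot(h_1,h_2)\rho=(g_1h_{\pi(1)},g_2h_{\pi(2)})\pi\rho$. Define $G_1=\{e\}$ and, for $k>1$, $G_k=\{(g_1,g_2)\pi\in B_k : g_1g_2\in G_{k-1}\}$. *)

theory Defs
  imports "HOL-Algebra.Group" "HOL-Algebra.Coset"
begin

text \<open>Elements of the iterated wreath products. \<open>Base b\<close> is an element of
  \<open>B_1 = C_2\<close> (\<open>b = True\<close> meaning \<open>\<sigma>\<close>); \<open>Wr g1 g2 p\<close> is the wreath recursion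
  \<open>(g1,g2)\<pi>\<close> with \<open>\<pi> = \<sigma>\<close> iff \<open>p = True\<close>.\<close>
datatype wr = Base bool | Wr wr wr bool

definition perm_app :: "bool \<Rightarrow> nat \<Rightarrow> nat" where
  "perm_app p i = (if p then 3 - i else i)"

fun wr_mult :: "wr \<Rightarrow> wr \<Rightarrow> wr" where
  "wr_mult (Base a) (Base b) = Base (a \<noteq> b)"
| "wr_mult (Wr g1 g2 p) (Wr h1 h2 q) =
     (let h = (\<lambda>i::nat. if i = 1 then h1 else h2)
      in Wr (wr_mult g1 (h (perm_app p 1))) (wr_mult g2 (h (perm_app p 2))) (p \<noteq> q))"
| "wr_mult _ _ = Base False"

text \<open>Carrier of \<open>B_k\<close> (\<open>B_0\<close> is unused and empty).\<close>
fun Bset :: "nat \<Rightarrow> wr set" where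
  "Bset 0 = {}"
| "Bset (Suc 0) = {Base b | b. True}"
| "Bset (Suc (Suc k)) = {Wr g1 g2 p | g1 g2 p. g1 \<in> Bset (Suc k) \<and> g2 \<in> Bset (Suc k)}"

fun wr_one :: "nat \<Rightarrow> wr" where
  "wr_one 0 = Base False"
| "wr_one (Suc 0) = Base False"
| "wr_one (Suc (Suc k)) = Wr (wr_one (Suc k)) (wr_one (Suc k)) False"

definition Bgrp :: "nat \<Rightarrow> wr monoid" where
  "Bgrp k = \<lparr>carrier = Bset k, mult = wr_mult, one = wr_one k\<rparr>"

fun Gset :: "nat \<Rightarrow> wr set" where
  "Gset 0 = {}"
| "Gset (Suc 0) = {wr_one (Suc 0)}"
| "Gset (Suc (Suc k)) = {Wr g1 g2 p | g1 g2 p.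
      Wr g1 g2 p \<in> Bset (Suc (Suc k)) \<and> wr_mult g1 g2 \<in> Gset (Suc k)}"

end

theory Submission
  imports Defs
begin

text \<open>Let \<open>\<theta> : B\<^sub>k \<rightarrow> C\<^sub>2\<close> be the parity map \<open>\<theta>(\<sigma>\<^sup>b) = b\<close>, \<open>\<theta>((g\<^sub>1,g\<^sub>2)\<pi>) = \<theta>(g\<^sub>1) + \<theta>(g\<^sub>2)\<close>.
  It ignores the top permutation, and \<open>\<pi>\<close> only swaps the two summands of the product, so
  \<open>\<theta>\<close> is a homomorphism. Since \<open>g\<^sub>1 g\<^sub>2 \<in> G\<^sub>k\<^sub>-\<^sub>1\<close> iff \<open>\<theta>(g\<^sub>1) = \<theta>(g\<^sub>2)\<close>, induction on \<open>k\<close>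
  shows that \<open>G\<^sub>k\<close> is the kernel of \<open>\<theta>\<close>, hence normal.\<close>

lemma wr_mult_Wr [simp]:
  "wr_mult (Wr g1 g2 p) (Wr h1 h2 q) =
     (if p then Wr (wr_mult g1 h2) (wr_mult g2 h1) (p \<noteq> q)
      else Wr (wr_mult g1 h1) (wr_mult g2 h2) (p \<noteq> q))"
  by (simp add: perm_app_def Let_def)

declare wr_mult.simps(2) [simp del]

lemma wr_mult_closed: "g \<in> Bset k \<Longrightarrow> h \<in> Bset k \<Longrightarrow> wr_mult g h \<in> Bset k"
  by (induction k arbitrary: g h rule: Bset.induct) auto

lemma wr_mult_assoc:
  "g \<in> Bset k \<Longrightarrow> h \<in> Bset k \<Longrightarrow> f \<in> Bset k \<Longrightarrow>
     wr_mult (wr_mult g h) f = wr_mult g (wr_mult h f)"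
proof (induction k arbitrary: g h f rule: Bset.induct)
  case (3 k)
  then obtain g1 g2 p h1 h2 q f1 f2 r
    where "g = Wr g1 g2 p" "h = Wr h1 h2 q" "f = Wr f1 f2 r"
      and "g1 \<in> Bset (Suc k)" "g2 \<in> Bset (Suc k)" "h1 \<in> Bset (Suc k)" "h2 \<in> Bset (Suc k)"
          "f1 \<in> Bset (Suc k)" "f2 \<in> Bset (Suc k)"
    by auto
  then show ?case
    by (cases p; cases q) (simp_all add: "3.IH" wr_mult_closed)
qed auto

lemma wr_one_in_Bset: "k \<ge> 1 \<Longrightarrow> wr_one k \<in> Bset k"
  by (induction k rule: Bset.induct) auto

lemma wr_one_mult: "g \<in> Bset k \<Longrightarrow> wr_mult (wr_one k) g = g"
  by (induction k arbitrary: g rule: Bset.induct) auto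

fun wr_inv :: "wr \<Rightarrow> wr" where
  "wr_inv (Base b) = Base b"
| "wr_inv (Wr g1 g2 p) =
     (if p then Wr (wr_inv g2) (wr_inv g1) True else Wr (wr_inv g1) (wr_inv g2) False)"

lemma wr_inv_in_Bset: "g \<in> Bset k \<Longrightarrow> wr_inv g \<in> Bset k"
  by (induction k arbitrary: g rule: Bset.induct) auto

lemma wr_inv_mult: "g \<in> Bset k \<Longrightarrow> wr_mult (wr_inv g) g = wr_one k"
  by (induction k arbitrary: g rule: Bset.induct) auto

lemma group_Bgrp: "k \<ge> 1 \<Longrightarrow> group (Bgrp k)"
  unfolding Bgrp_def
  by (rule groupI)
     (auto simp: wr_mult_closed wr_one_in_Bset wr_mult_assoc wr_one_mult
        intro: wr_inv_in_Bset wr_inv_mult)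

fun wr_parity :: "wr \<Rightarrow> bool" where
  "wr_parity (Base b) = b"
| "wr_parity (Wr g1 g2 p) = (wr_parity g1 \<noteq> wr_parity g2)"

lemma wr_parity_mult:
  "g \<in> Bset k \<Longrightarrow> h \<in> Bset k \<Longrightarrow> wr_parity (wr_mult g h) = (wr_parity g \<noteq> wr_parity h)"
  by (induction k arbitrary: g h rule: Bset.induct) (auto split: if_splits)

lemma group_hom_parity: "k \<ge> 1 \<Longrightarrow> group_hom (Bgrp k) (Bgrp 1) (\<lambda>g. Base (wr_parity g))"
  by (intro group_hom.intro group_hom_axioms.intro homI group_Bgrp)
     (auto simp: Bgrp_def wr_parity_mult)

lemma Gset_eq_even_parity: "k \<ge> 1 \<Longrightarrow> Gset k = {g \<in> Bset k. \<not> wr_parity g}"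
proof (induction k rule: Bset.induct)
  case (3 k)
  then have IH: "Gset (Suc k) = {g \<in> Bset (Suc k). \<not> wr_parity g}"
    by simp
  have "wr_mult g1 g2 \<in> Gset (Suc k) \<longleftrightarrow> wr_parity g1 = wr_parity g2"
    if "g1 \<in> Bset (Suc k)" "g2 \<in> Bset (Suc k)" for g1 g2
    using IH wr_mult_closed[OF that] wr_parity_mult[OF that] by blast
  then show ?case
    by auto
qed auto

theorem mainTheorem12:
  fixes k :: nat
  assumes "k \<ge> 1"
  shows "Gset k \<lhd> Bgrp k"
proof -
  interpret parity: group_hom "Bgrp k" "Bgrp 1" "\<lambda>g. Base (wr_parity g)"
    using group_hom_parity[OF assms] .
  have "Gset k = kernel (Bgrp k) (Bgrp 1) (\<lambda>g. Base (wr_parity g))"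
    using Gset_eq_even_parity[OF assms] by (auto simp: kernel_def Bgrp_def)
  then show ?thesis
    using parity.normal_kernel by simp
qed

end
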